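(* Let $G$ be a compact matrix Lie group of $n\times n$ unitary matrices with normalized Haar measure $\eta$, let $\epsilon>0$, and let $X=\{x_1,\dots,x_N\}\subset\mathbb{C}^n$ satisfy $x_i\neq x_j$ for $i\neq j$ and $Ax_i\neq x_i$ for all $i$ and all $A\in G$ with $A\neq I$. Let $t$ be a positive integer and let $P^t_{ij}$ be as in the context. Suppose $x_j=Q\cdot x_i$ for some $Q\in G$. Then for all $k,r\in[N]$ and $R\in G$, $$\int_G P^t_{ik}(I,C)\,P^t_{ir}(I,CR)\,d\eta(C)=\int_G P^t_{jk}(I,C)\,P^t_{jr}(I,CR)\,d\eta(C),$$ i.e. $P^t_{i,\cdot}(I,\cdot)\circledast P^t_{i,\cdot}(I,\cdot)=P^t_{j,\cdot}(I,\cdot)\circledast P^t_{j,\cdot}(I,\cdot)$ as functions on $[N]^2\times G$.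
   Context: $[N]=\{1,\dots,N\}$. $W_{ij}(A,B)=e^{-\|Ax_i-Bx_j\|^2/\epsilon}$; $D_{ii}=\sum_{j=1}^N\int_G W_{ij}(I,C)\,d\eta(C)$; $P_{ij}(A,B)=W_{ij}(A,B)/D_{ii}$. $P^1_{ij}=P_{ij}$ and $P^t_{ij}(A,B)=\sum_{k=1}^N\int_G P^{t-1}_{ik}(A,C)P_{kj}(C,B)\,d\eta(C)$ for $t\ge2$. For functions $f,g$ on $[N]\times G$ (written $f(k,C)=f_k(C)$), $f\circledast g$ is the function on $[N]^2\times G$ given by $(f\circledast g)(k,r,R)=\int_G f_k(C)\,g_r(CR)\,d\eta(C)$; $P^t_{i,\cdot}(I,\cdot)$ denotes $(k,C)\mapsto P^t_{ik}(I,C)$. *)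

theory Defs
  imports "HOL-Analysis.Analysis" "HOL-Probability.Probability"
begin

type_synonym 'n cmat = "complex ^ 'n ^ 'n"

definition ctrans :: "'n::finite cmat \<Rightarrow> 'n cmat" where
  "ctrans A = (\<chi> i j. cnj (A $ j $ i))"

definition unitary_mat :: "'n::finite cmat \<Rightarrow> bool" where
  "unitary_mat A \<longleftrightarrow> A ** ctrans A = mat 1 \<and> ctrans A ** A = mat 1"

text \<open>A compact matrix Lie group of unitary matrices: a compact subgroup of U(n)
  (closed subgroups of U(n) are Lie groups by Cartan's theorem).\<close>
definition compact_unitary_group :: "'n::finite cmat set \<Rightarrow> bool" where
  "compact_unitary_group G \<longleftrightarrow>
     G \<subseteq> {A. unitary_mat A} \<and> mat 1 \<in> G \<and>
     (\<forall>A\<in>G. \<forall>B\<in>G. A ** B \<in> G) \<and> (\<forall>A\<in>G. ctrans A \<in> G) \<and> compact G"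

text \<open>Normalized Haar measure on a compact group (bi-invariant, since compact
  groups are unimodular).\<close>
definition normalized_haar :: "'n::finite cmat set \<Rightarrow> 'n cmat measure \<Rightarrow> bool" where
  "normalized_haar G \<eta> \<longleftrightarrow>
     prob_space \<eta> \<and> space \<eta> = G \<and> sets \<eta> = sets (restrict_space borel G) \<and>
     (\<forall>A\<in>G. distr \<eta> \<eta> (\<lambda>C. A ** C) = \<eta>) \<and>
     (\<forall>A\<in>G. distr \<eta> \<eta> (\<lambda>C. C ** A) = \<eta>)"

definition Wk :: "real \<Rightarrow> (nat \<Rightarrow> complex ^ 'n) \<Rightarrow> nat \<Rightarrow> nat \<Rightarrow> 'n::finite cmat \<Rightarrow> 'n cmat \<Rightarrow> real" where
  "Wk \<epsilon> x i j A B = exp (- (norm (A *v x i - B *v x j))\<^sup>2 / \<epsilon>)"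

definition Dg :: "'n::finite cmat measure \<Rightarrow> real \<Rightarrow> nat \<Rightarrow> (nat \<Rightarrow> complex ^ 'n) \<Rightarrow> nat \<Rightarrow> real" where
  "Dg \<eta> \<epsilon> N x i = (\<Sum>j\<in>{1..N}. \<integral>C. Wk \<epsilon> x i j (mat 1) C \<partial>\<eta>)"

definition Pk :: "'n::finite cmat measure \<Rightarrow> real \<Rightarrow> nat \<Rightarrow> (nat \<Rightarrow> complex ^ 'n)
    \<Rightarrow> nat \<Rightarrow> nat \<Rightarrow> 'n cmat \<Rightarrow> 'n cmat \<Rightarrow> real" where
  "Pk \<eta> \<epsilon> N x i j A B = Wk \<epsilon> x i j A B / Dg \<eta> \<epsilon> N x i"

text \<open>Ppow eta eps N x t is $P^t$ for $t \<ge> 1$ (the value at t = 0 is irrelevant).\<close>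
fun Ppow :: "'n::finite cmat measure \<Rightarrow> real \<Rightarrow> nat \<Rightarrow> (nat \<Rightarrow> complex ^ 'n)
    \<Rightarrow> nat \<Rightarrow> nat \<Rightarrow> nat \<Rightarrow> 'n cmat \<Rightarrow> 'n cmat \<Rightarrow> real" where
  "Ppow \<eta> \<epsilon> N x 0 i j A B = 0"
| "Ppow \<eta> \<epsilon> N x (Suc 0) i j A B = Pk \<eta> \<epsilon> N x i j A B"
| "Ppow \<eta> \<epsilon> N x (Suc (Suc t)) i j A B =
     (\<Sum>k\<in>{1..N}. \<integral>C. Ppow \<eta> \<epsilon> N x (Suc t) i k A C * Pk \<eta> \<epsilon> N x k j C B \<partial>\<eta>)"

definition gconv :: "'n::finite cmat measure \<Rightarrow> (nat \<Rightarrow> 'n cmat \<Rightarrow> real)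
    \<Rightarrow> (nat \<Rightarrow> 'n cmat \<Rightarrow> real) \<Rightarrow> nat \<Rightarrow> nat \<Rightarrow> 'n cmat \<Rightarrow> real" where
  "gconv \<eta> f g k r R = (\<integral>C. f k C * g r (C ** R) \<partial>\<eta>)"

end

(*
  The kernels P^t are invariant under simultaneous left translation of both group
  arguments: W is, since G acts unitarily, and hence so are D and, inductively, P^t,
  by left invariance of the Haar measure. Replacing x_i by x_j = Q x_i multiplies the
  first group argument by Q on the right, so P^t_jk(I, C) = P^t_ik(Q, C) = P^t_ik(I, Q^* C),
  and the substitution C -> Q^* C in the Haar integral defining the convolution gives the
  identity.
*)
theory Submission imports Defs begin

lemma complex_of_real_norm_square_vec:
  "complex_of_real ((norm w)\<^sup>2) = (\<Sum>i\<in>UNIV. w $ i * cnj (w $ i))"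
  for w :: "complex ^ 'n::finite"
proof -
  have "(norm w)\<^sup>2 = (\<Sum>i\<in>UNIV. (norm (w $ i))\<^sup>2)"
    unfolding norm_vec_def L2_set_def by (simp add: sum_nonneg)
  then show ?thesis
    by (simp only: of_real_sum complex_norm_square)
qed

lemma matrix_vector_mult_adjoint:
  "(\<Sum>i\<in>UNIV. (A *v v) $ i * cnj (w $ i)) = (\<Sum>k\<in>UNIV. v $ k * cnj ((ctrans A *v w) $ k))"
  for A :: "'n::finite cmat"
proof -
  have "(\<Sum>i\<in>UNIV. (A *v v) $ i * cnj (w $ i)) = (\<Sum>i\<in>UNIV. \<Sum>k\<in>UNIV. A $ i $ k * v $ k * cnj (w $ i))"
    unfolding matrix_vector_mult_def by (simp add: sum_distrib_right)
  also have "\<dots> = (\<Sum>k\<in>UNIV. \<Sum>i\<in>UNIV. v $ k * (A $ i $ k * cnj (w $ i)))"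
    by (subst sum.swap) (simp add: mult_ac)
  also have "\<dots> = (\<Sum>k\<in>UNIV. v $ k * cnj ((ctrans A *v w) $ k))"
    unfolding matrix_vector_mult_def ctrans_def by (simp add: sum_distrib_left cnj_sum)
  finally show ?thesis .
qed

lemma unitary_mat_norm_preserving:
  assumes "unitary_mat Q"
  shows "norm (Q *v v) = norm v"
proof -
  have "ctrans Q *v (Q *v v) = v"
    using assms unfolding unitary_mat_def by (simp add: matrix_vector_mul_assoc)
  then have "complex_of_real ((norm (Q *v v))\<^sup>2) = complex_of_real ((norm v)\<^sup>2)"
    by (simp only: complex_of_real_norm_square_vec matrix_vector_mult_adjoint)
  then have "(norm (Q *v v))\<^sup>2 = (norm v)\<^sup>2"
    by (simp only: of_real_eq_iff)
  then show ?thesis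
    by (simp add: power2_eq_iff_nonneg)
qed

lemma unitary_mat_cancel_left:
  assumes "unitary_mat U"
  shows "U ** (ctrans U ** C) = C" and "ctrans U ** (U ** C) = C"
  using assms unfolding unitary_mat_def by (simp_all add: matrix_mul_assoc)

lemma compact_unitary_group_unitary: "compact_unitary_group G \<Longrightarrow> U \<in> G \<Longrightarrow> unitary_mat U"
  unfolding compact_unitary_group_def by auto

lemma compact_unitary_group_ctrans: "compact_unitary_group G \<Longrightarrow> U \<in> G \<Longrightarrow> ctrans U \<in> G"
  unfolding compact_unitary_group_def by auto

lemma measurable_haar_left_mult:
  assumes G: "compact_unitary_group G" and \<eta>: "normalized_haar G \<eta>" and U: "U \<in> G"
  shows "(\<lambda>C. U ** C) \<in> measurable \<eta> \<eta>"
proof -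
  have "continuous_on UNIV (\<lambda>C. U ** C)"
    unfolding matrix_matrix_mult_def by (intro continuous_intros)
  then have "(\<lambda>C. U ** C) \<in> measurable (restrict_space borel G) (restrict_space borel G)"
    using G U unfolding compact_unitary_group_def
    by (intro measurable_restrict_space3 borel_measurable_continuous_onI) auto
  then show ?thesis
    using \<eta> unfolding normalized_haar_def by (metis measurable_cong_sets)
qed

lemma integral_haar_left_mult:
  fixes f :: "'n::finite cmat \<Rightarrow> 'b::{banach, second_countable_topology}"
  assumes G: "compact_unitary_group G" and \<eta>: "normalized_haar G \<eta>" and U: "U \<in> G"
  shows "(\<integral>C. f (U ** C) \<partial>\<eta>) = (\<integral>C. f C \<partial>\<eta>)"
proof (cases "f \<in> borel_measurable \<eta>")
  case True
  have "(\<integral>C. f C \<partial>\<eta>) = (\<integral>C. f C \<partial>distr \<eta> \<eta> (\<lambda>C. U ** C))"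
    using \<eta> U unfolding normalized_haar_def by simp
  also have "\<dots> = (\<integral>C. f (U ** C) \<partial>\<eta>)"
    by (rule integral_distr[OF measurable_haar_left_mult[OF G \<eta> U] True])
  finally show ?thesis ..
next
  case False
  have "(\<lambda>C. f (U ** C)) \<notin> borel_measurable \<eta>"
  proof
    assume "(\<lambda>C. f (U ** C)) \<in> borel_measurable \<eta>"
    from measurable_compose[OF measurable_haar_left_mult[OF G \<eta> compact_unitary_group_ctrans[OF G U]] this]
    show False
      using False by (simp add: unitary_mat_cancel_left(1)[OF compact_unitary_group_unitary[OF G U]])
  qed
  with False show ?thesis
    by (metis borel_measurable_integrable not_integrable_integral_eq)
qed

lemma gconv_left_mult:
  assumes "compact_unitary_group G" and "normalized_haar G \<eta>" and "U \<in> G"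
  shows "gconv \<eta> (\<lambda>k C. f k (U ** C)) (\<lambda>k C. g k (U ** C)) k r R = gconv \<eta> f g k r R"
  unfolding gconv_def matrix_mul_assoc
  by (rule integral_haar_left_mult[OF assms, where f = "\<lambda>C. f k C * g r (C ** R)"])

lemma Wk_left_mult:
  assumes "unitary_mat U"
  shows "Wk \<epsilon> x m k (U ** A) (U ** B) = Wk \<epsilon> x m k A B"
proof -
  have "(U ** A) *v x m - (U ** B) *v x k = U *v (A *v x m - B *v x k)"
    by (simp add: matrix_vector_mul_assoc[symmetric] matrix_vector_mult_diff_distrib)
  then show ?thesis
    unfolding Wk_def by (simp add: unitary_mat_norm_preserving[OF assms])
qed

lemma Pk_left_mult:
  "unitary_mat U \<Longrightarrow> Pk \<eta> \<epsilon> N x m k (U ** A) (U ** B) = Pk \<eta> \<epsilon> N x m k A B"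
  unfolding Pk_def by (simp add: Wk_left_mult)

lemma Ppow_left_mult:
  assumes G: "compact_unitary_group G" and \<eta>: "normalized_haar G \<eta>" and U: "U \<in> G"
  shows "Ppow \<eta> \<epsilon> N x t m k (U ** A) (U ** B) = Ppow \<eta> \<epsilon> N x t m k A B"
proof (induction t arbitrary: k B)
  case (Suc t)
  note unitary = compact_unitary_group_unitary[OF G U]
  show ?case
  proof (cases t)
    case (Suc s)
    have "Ppow \<eta> \<epsilon> N x (Suc (Suc s)) m k (U ** A) (U ** B)
        = (\<Sum>l\<in>{1..N}. \<integral>C. Ppow \<eta> \<epsilon> N x (Suc s) m l (U ** A) (U ** C)
              * Pk \<eta> \<epsilon> N x l k (U ** C) (U ** B) \<partial>\<eta>)"
      by (simp only: Ppow.simps integral_haar_left_mult[OF G \<eta> U,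
            where f = "\<lambda>C. Ppow \<eta> \<epsilon> N x (Suc s) m _ (U ** A) C * Pk \<eta> \<epsilon> N x _ k C (U ** B)"])
    also have "\<dots> = Ppow \<eta> \<epsilon> N x (Suc (Suc s)) m k A B"
      using Suc.IH by (simp add: Suc Pk_left_mult[OF unitary])
    finally show ?thesis
      by (simp only: Suc)
  qed (simp add: Pk_left_mult[OF unitary])
qed simp

lemma Wk_orbit: "x j = Q *v x i \<Longrightarrow> Wk \<epsilon> x j k A B = Wk \<epsilon> x i k (A ** Q) B"
  unfolding Wk_def by (simp add: matrix_vector_mul_assoc)

lemma Dg_orbit:
  assumes G: "compact_unitary_group G" and \<eta>: "normalized_haar G \<eta>" and Q: "Q \<in> G"
    and orbit: "x j = Q *v x i"
  shows "Dg \<eta> \<epsilon> N x j = Dg \<eta> \<epsilon> N x i"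
proof -
  have "Wk \<epsilon> x j k (mat 1) (Q ** C) = Wk \<epsilon> x i k (mat 1) C" for k C
    using Wk_left_mult[OF compact_unitary_group_unitary[OF G Q], of \<epsilon> x i k "mat 1" C]
    by (simp add: Wk_orbit[OF orbit])
  then have "(\<integral>C. Wk \<epsilon> x j k (mat 1) C \<partial>\<eta>) = (\<integral>C. Wk \<epsilon> x i k (mat 1) C \<partial>\<eta>)" for k
    using integral_haar_left_mult[OF G \<eta> Q, of "Wk \<epsilon> x j k (mat 1)"] by simp
  then show ?thesis
    unfolding Dg_def by simp
qed

lemma Ppow_orbit:
  assumes orbit: "x j = Q *v x i" and "Dg \<eta> \<epsilon> N x j = Dg \<eta> \<epsilon> N x i"
  shows "Ppow \<eta> \<epsilon> N x t j k A B = Ppow \<eta> \<epsilon> N x t i k (A ** Q) B"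
proof (induction t arbitrary: k B)
  case (Suc t)
  have "Pk \<eta> \<epsilon> N x j k A B = Pk \<eta> \<epsilon> N x i k (A ** Q) B" for k B
    unfolding Pk_def Wk_orbit[OF orbit] assms(2) ..
  with Suc.IH show ?case
    by (cases t) simp_all
qed simp

theorem proposition2:
  fixes G :: "'n::finite cmat set" and \<eta> :: "'n cmat measure"
    and \<epsilon> :: real and N :: nat and x :: "nat \<Rightarrow> complex ^ 'n"
    and t i j :: nat and Q :: "'n cmat"
  assumes "compact_unitary_group G"
    and "normalized_haar G \<eta>"
    and "\<epsilon> > 0"
    and "\<forall>a\<in>{1..N}. \<forall>b\<in>{1..N}. a \<noteq> b \<longrightarrow> x a \<noteq> x b"
    and "\<forall>a\<in>{1..N}. \<forall>A\<in>G. A \<noteq> mat 1 \<longrightarrow> A *v x a \<noteq> x a"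
    and "t \<ge> 1"
    and "i \<in> {1..N}" and "j \<in> {1..N}"
    and "Q \<in> G" and "x j = Q *v x i"
  shows "\<forall>k\<in>{1..N}. \<forall>r\<in>{1..N}. \<forall>R\<in>G.
           gconv \<eta> (\<lambda>k C. Ppow \<eta> \<epsilon> N x t i k (mat 1) C) (\<lambda>k C. Ppow \<eta> \<epsilon> N x t i k (mat 1) C) k r R
         = gconv \<eta> (\<lambda>k C. Ppow \<eta> \<epsilon> N x t j k (mat 1) C) (\<lambda>k C. Ppow \<eta> \<epsilon> N x t j k (mat 1) C) k r R"
proof -
  note G = assms(1) and \<eta> = assms(2) and Q = assms(9) and orbit = assms(10)
  have "Ppow \<eta> \<epsilon> N x t j k (mat 1) C = Ppow \<eta> \<epsilon> N x t i k (mat 1) (ctrans Q ** C)" for k C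
  proof -
    have "Ppow \<eta> \<epsilon> N x t j k (mat 1) C = Ppow \<eta> \<epsilon> N x t i k (Q ** mat 1) (Q ** (ctrans Q ** C))"
      using Ppow_orbit[OF orbit Dg_orbit[OF G \<eta> Q orbit]]
      by (simp add: unitary_mat_cancel_left[OF compact_unitary_group_unitary[OF G Q]])
    also have "\<dots> = Ppow \<eta> \<epsilon> N x t i k (mat 1) (ctrans Q ** C)"
      by (rule Ppow_left_mult[OF G \<eta> Q])
    finally show ?thesis .
  qed
  then show ?thesis
    by (simp add: gconv_left_mult[OF G \<eta> compact_unitary_group_ctrans[OF G Q],
          where f = "\<lambda>k. Ppow \<eta> \<epsilon> N x t i k (mat 1)" and g = "\<lambda>k. Ppow \<eta> \<epsilon> N x t i k (mat 1)"])
qed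

end
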